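(* Let $p_1,p_2\in(0,1)$ and let $\{X^1_k\}_{k\ge1}$, $\{X^2_k\}_{k\ge1}$ be two independent sequences of i.i.d. Bernoulli random variables with success parameters $p_1$ and $p_2$ respectively. Set $S^j(n)=\sum_{i=1}^n X^j_i$ for $j=1,2$ and $J^2=\inf\{n\ge1: S^1(n)=S^2(n)\}$ (with $\inf\emptyset=\infty$). Then $P(J^2=\infty)=|p_1-p_2|$, and for all $p_1,p_2\in(0,1)$ we have $E(J^2)=\infty$.
   Context: All random variables $X^j_k$ ($j=1,2$, $k\ge1$) are mutually independent, and $P(X^j_k=1)=p_j=1-P(X^j_k=0)$. *)

theory Defs
  imports "HOL-Probability.Probability"
begin

definition partial_sum :: "(nat \<Rightarrow> nat \<Rightarrow> 'a \<Rightarrow> real) \<Rightarrow> nat \<Rightarrow> nat \<Rightarrow> 'a \<Rightarrow> real" where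
  "partial_sum X j n \<omega> = (\<Sum>i=1..n. X j i \<omega>)"

definition first_meet :: "(nat \<Rightarrow> nat \<Rightarrow> 'a \<Rightarrow> real) \<Rightarrow> 'a \<Rightarrow> enat" where
  "first_meet X \<omega> =
     (if \<exists>n\<ge>1. partial_sum X 1 n \<omega> = partial_sum X 2 n \<omega>
      then enat (LEAST n. n \<ge> 1 \<and> partial_sum X 1 n \<omega> = partial_sum X 2 n \<omega>)
      else \<infinity>)"

end

theory Submission
  imports Defs
begin

(* The increments X^1_k - X^2_k are i.i.d. with values 1, -1, 0 taken with probabilities
   a = p1 (1 - p2), b = (1 - p1) p2 and 1 - a - b, so S^1 - S^2 is a lazy random walk on the
   integers and J^2 is its first return time to 0.  The probability that the walk started at x
   avoids 0 for n steps satisfies a one-step recursion.  It is bounded below by the gambler's ruin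
   probability 1 - (b/a)^x, and its limit in n is a bounded harmonic function on the nonnegative
   integers vanishing at 0, hence at most 1 - b/a at 1.  Therefore
   P(J^2 = infinity) = a (1 - b/a)^+ + b (1 - a/b)^+ = |a - b| = |p1 - p2|.
   Finally E J^2 = sum_n P(J^2 > n) diverges: for p1 <> p2 the terms stay above |p1 - p2|, and for
   p1 = p2 the lower bound min(1, x/(n+1)) on the survival probabilities gives
   P(J^2 > n + 1) >= a/(n+1). *)

(* survival a b n x: probability that the lazy walk with up-probability a and down-probability b,
   started at x, is nonzero at all times 1, ..., n. *)
fun survival :: "real \<Rightarrow> real \<Rightarrow> nat \<Rightarrow> int \<Rightarrow> real" where
  "survival a b 0 x = 1"
| "survival a b (Suc n) x =
     a * (if x + 1 = 0 then 0 else survival a b n (x + 1))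
   + b * (if x - 1 = 0 then 0 else survival a b n (x - 1))
   + (1 - a - b) * (if x = 0 then 0 else survival a b n x)"

lemma survival_bounds:
  assumes "0 \<le> a" "0 \<le> b" "a + b \<le> 1"
  shows "0 \<le> survival a b n x \<and> survival a b n x \<le> 1"
proof (induction n arbitrary: x)
  case 0
  show ?case by simp
next
  case (Suc n)
  define f where "f y = (if y = 0 then 0 else survival a b n y)" for y
  have f: "0 \<le> f y \<and> f y \<le> 1" for y
    using Suc.IH by (simp add: f_def)
  have step: "survival a b (Suc n) x = a * f (x + 1) + b * f (x - 1) + (1 - a - b) * f x"
    by (simp add: f_def)
  have "0 \<le> a * f (x + 1) + b * f (x - 1) + (1 - a - b) * f x"
    using f assms by (intro add_nonneg_nonneg mult_nonneg_nonneg) auto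
  moreover have "a * f (x + 1) + b * f (x - 1) + (1 - a - b) * f x \<le> a * 1 + b * 1 + (1 - a - b) * 1"
    using f assms by (intro add_mono mult_left_mono) auto
  ultimately show ?case
    unfolding step by simp
qed

lemma survival_mirror: "survival a b n x = survival b a n (- x)"
proof (induction n arbitrary: x)
  case 0
  show ?case by simp
next
  case (Suc n)
  have "- x + 1 = - (x - 1)" "- x - 1 = - (x + 1)"
    by simp_all
  then show ?case
    by (simp only: survival.simps Suc.IH) (auto simp: algebra_simps)
qed

lemma survival_Suc_le:
  assumes "0 \<le> a" "0 \<le> b" "a + b \<le> 1"
  shows "survival a b (Suc n) x \<le> survival a b n x"
proof (induction n arbitrary: x)
  case 0
  show ?case
    using survival_bounds[OF assms, of "Suc 0" x] by (simp only: survival.simps(1))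
next
  case (Suc n)
  define f where "f k y = (if y = 0 then 0 else survival a b k y)" for k y
  have step: "survival a b (Suc k) x = a * f k (x + 1) + b * f k (x - 1) + (1 - a - b) * f k x" for k
    by (simp add: f_def)
  have "f (Suc n) y \<le> f n y" for y
    using Suc.IH[of y] by (simp add: f_def del: survival.simps)
  then show ?case
    unfolding step using assms by (intro add_mono mult_left_mono) auto
qed

lemma survival_convergent:
  assumes "0 \<le> a" "0 \<le> b" "a + b \<le> 1"
  shows "convergent (\<lambda>n. survival a b n x)"
proof -
  have "decseq (\<lambda>n. survival a b n x)"
    using survival_Suc_le[OF assms] by (intro decseq_SucI)
  then show ?thesis
    using survival_bounds[OF assms] decseq_convergent convergent_def by metis
qed

lemma survival_ge_ruin:
  assumes "0 < a" "0 \<le> b" "a + b \<le> 1" "x \<ge> 1"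
  shows "1 - (b / a) ^ nat x \<le> survival a b n x"
  using assms(4)
proof (induction n arbitrary: x)
  case 0
  then show ?case
    using assms by simp
next
  case (Suc n)
  define r where "r = b / a"
  define k where "k = nat x - 1"
  have x: "nat x = Suc k"
    using Suc.prems by (simp add: k_def)
  have up: "1 - r ^ Suc (Suc k) \<le> survival a b n (x + 1)"
    using Suc.IH[of "x + 1"] Suc.prems x by (simp add: r_def nat_add_distrib)
  have stay: "1 - r ^ Suc k \<le> survival a b n x"
    using Suc.IH[of x] Suc.prems x by (simp add: r_def)
  have down: "1 - r ^ k \<le> (if x - 1 = 0 then 0 else survival a b n (x - 1))"
  proof (cases "x = 1")
    case True
    then have "k = 0"
      using x by simp
    then show ?thesis
      using True by simp
  next
    case False
    then show ?thesis
      using Suc.IH[of "x - 1"] Suc.prems x by (simp add: r_def nat_diff_distrib)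
  qed
  have "b = r * a"
    using assms by (simp add: r_def)
  \<comment> \<open>the ruin probabilities \<open>1 - r ^ x\<close> are harmonic for the walk\<close>
  then have "1 - r ^ Suc k = a * (1 - r ^ Suc (Suc k)) + b * (1 - r ^ k) + (1 - a - b) * (1 - r ^ Suc k)"
    by (simp add: algebra_simps)
  also have "\<dots> \<le> a * survival a b n (x + 1) + b * (if x - 1 = 0 then 0 else survival a b n (x - 1))
      + (1 - a - b) * survival a b n x"
    using up down stay assms by (intro add_mono mult_left_mono) auto
  also have "\<dots> = survival a b (Suc n) x"
    using Suc.prems by simp
  finally show ?case
    unfolding x r_def .
qed

lemma harmonic_seq_eq_geometric_sum:
  fixes u :: "nat \<Rightarrow> real"
  assumes "0 < a" "u 0 = 0"
    and harmonic: "\<And>k. a * u (Suc (Suc k)) + b * u k = (a + b) * u (Suc k)"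
  shows "u k = u 1 * (\<Sum>i<k. (b / a) ^ i)"
proof -
  have increment: "u (Suc k) - u k = (b / a) ^ k * u 1" for k
  proof (induction k)
    case 0
    show ?case
      using \<open>u 0 = 0\<close> by simp
  next
    case (Suc k)
    have "a * (u (Suc (Suc k)) - u (Suc k)) = b * (u (Suc k) - u k)"
      using harmonic[of k] by (simp add: algebra_simps)
    then have "u (Suc (Suc k)) - u (Suc k) = b / a * (u (Suc k) - u k)"
      using \<open>0 < a\<close> by (simp add: field_simps)
    then show ?case
      using Suc.IH by simp
  qed
  show ?thesis
  proof (induction k)
    case 0
    show ?case
      using \<open>u 0 = 0\<close> by simp
  next
    case (Suc k)
    then show ?case
      using increment[of k] by (simp add: algebra_simps)
  qed
qed

lemma bounded_harmonic_seq_le: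
  fixes u :: "nat \<Rightarrow> real"
  assumes "0 < a" "0 < b" "u 0 = 0"
    and harmonic: "\<And>k. a * u (Suc (Suc k)) + b * u k = (a + b) * u (Suc k)"
    and bounded: "\<And>k. u k \<le> 1"
  shows "u 1 \<le> max 0 (1 - b / a)"
proof (rule ccontr)
  define r where "r = b / a"
  have "0 < r"
    using assms by (simp add: r_def)
  assume "\<not> u 1 \<le> max 0 (1 - b / a)"
  then have "0 < u 1" "1 - r < u 1"
    by (auto simp: r_def)
  have partial_sums: "(\<Sum>i<k. r ^ i) \<le> 1 / u 1" for k
    using harmonic_seq_eq_geometric_sum[OF \<open>0 < a\<close> \<open>u 0 = 0\<close> harmonic, of k] bounded[of k] \<open>0 < u 1\<close>
    by (simp add: r_def pos_le_divide_eq mult.commute)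
  have "summable (\<lambda>i. r ^ i)"
    using partial_sums \<open>0 < r\<close> by (intro summableI_nonneg_bounded) auto
  then have "r < 1"
    using \<open>0 < r\<close> by simp
  have "1 / (1 - r) \<le> 1 / u 1"
    using suminf_le_const[OF \<open>summable (\<lambda>i. r ^ i)\<close> partial_sums] suminf_geometric[of r] \<open>0 < r\<close> \<open>r < 1\<close>
    by simp
  then show False
    using \<open>0 < u 1\<close> \<open>1 - r < u 1\<close> \<open>r < 1\<close> by (simp add: divide_le_eq_1 frac_le_eq field_simps)
qed

lemma survival_limit_one_le:
  assumes "0 < a" "0 < b" "a + b \<le> 1"
  shows "lim (\<lambda>n. survival a b n 1) \<le> max 0 (1 - b / a)"
proof -
  have ab: "0 \<le> a" "0 \<le> b" "a + b \<le> 1"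
    using assms by simp_all
  define v where "v n k = (if k = 0 then 0 else survival a b n (int k))" for n k
  define u where "u k = lim (\<lambda>n. v n k)" for k
  have v_lim: "(\<lambda>n. v n k) \<longlonglongrightarrow> u k" for k
    using survival_convergent[OF ab, of "int k"]
    by (cases "k = 0") (simp_all add: u_def v_def convergent_LIMSEQ_iff)
  have v_step: "v (Suc n) (Suc k) = a * v n (Suc (Suc k)) + b * v n k + (1 - a - b) * v n (Suc k)" for n k
    by (simp add: v_def)
  have harmonic: "a * u (Suc (Suc k)) + b * u k = (a + b) * u (Suc k)" for k
  proof -
    have "(\<lambda>n. v (Suc n) (Suc k)) \<longlonglongrightarrow> u (Suc k)"
      using v_lim by (rule LIMSEQ_Suc)
    moreover have "(\<lambda>n. v (Suc n) (Suc k)) \<longlonglongrightarrow> a * u (Suc (Suc k)) + b * u k + (1 - a - b) * u (Suc k)"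
      unfolding v_step by (intro tendsto_intros v_lim)
    ultimately have "u (Suc k) = a * u (Suc (Suc k)) + b * u k + (1 - a - b) * u (Suc k)"
      by (rule LIMSEQ_unique)
    then show ?thesis
      by (simp add: algebra_simps)
  qed
  have "u k \<le> 1" for k
    using v_lim[of k] survival_bounds[OF ab] by (intro LIMSEQ_le_const2) (auto simp: v_def)
  moreover have "u 0 = 0"
    by (simp add: u_def v_def)
  ultimately have "u 1 \<le> max 0 (1 - b / a)"
    using assms harmonic by (intro bounded_harmonic_seq_le[where u = u])
  then show ?thesis
    by (simp add: u_def v_def)
qed

lemma abs_diff_eq_ruin_sum:
  fixes a b :: real
  assumes "0 < a" "0 < b"
  shows "a * max 0 (1 - b / a) + b * max 0 (1 - a / b) = \<bar>a - b\<bar>"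
proof (cases "a \<le> b")
  case True
  then have "1 - b / a \<le> 0" "0 \<le> 1 - a / b"
    using assms by (simp_all add: field_simps)
  then have "a * max 0 (1 - b / a) + b * max 0 (1 - a / b) = b * (1 - a / b)"
    by (simp add: max_absorb1 max_absorb2)
  also have "\<dots> = \<bar>a - b\<bar>"
    using True assms by (simp add: field_simps)
  finally show ?thesis .
next
  case False
  then have "0 \<le> 1 - b / a" "1 - a / b \<le> 0"
    using assms by (simp_all add: field_simps)
  then have "a * max 0 (1 - b / a) + b * max 0 (1 - a / b) = a * (1 - b / a)"
    by (simp add: max_absorb1 max_absorb2)
  also have "\<dots> = \<bar>a - b\<bar>"
    using False assms by (simp add: field_simps)
  finally show ?thesis .
qed

lemma survival_zero_ge_abs_diff:
  assumes "0 < a" "0 < b" "a + b \<le> 1"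
  shows "\<bar>a - b\<bar> \<le> survival a b n 0"
proof (cases n)
  case 0
  then show ?thesis
    using assms by simp
next
  case (Suc m)
  have up: "max 0 (1 - b / a) \<le> survival a b m 1"
    using survival_ge_ruin[of a b 1 m] survival_bounds[of a b m 1] assms by simp
  have down: "max 0 (1 - a / b) \<le> survival a b m (- 1)"
    using survival_ge_ruin[of b a 1 m] survival_bounds[of b a m 1] survival_mirror[of a b m "- 1"] assms
    by simp
  have "a * max 0 (1 - b / a) + b * max 0 (1 - a / b) \<le> a * survival a b m 1 + b * survival a b m (- 1)"
    using up down assms by (intro add_mono mult_left_mono) auto
  then show ?thesis
    using Suc abs_diff_eq_ruin_sum[OF \<open>0 < a\<close> \<open>0 < b\<close>] by simp
qed

lemma survival_zero_tendsto:
  assumes "0 < a" "0 < b" "a + b \<le> 1"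
  shows "(\<lambda>n. survival a b n 0) \<longlonglongrightarrow> \<bar>a - b\<bar>"
proof -
  have ba: "0 < b" "0 < a" "b + a \<le> 1"
    using assms by simp_all
  define L1 where "L1 = lim (\<lambda>n. survival a b n 1)"
  define L2 where "L2 = lim (\<lambda>n. survival b a n 1)"
  have "(\<lambda>n. survival a b n 1) \<longlonglongrightarrow> L1"
    using survival_convergent[of a b 1] assms by (simp add: L1_def convergent_LIMSEQ_iff)
  moreover have "(\<lambda>n. survival b a n 1) \<longlonglongrightarrow> L2"
    using survival_convergent[of b a 1] ba by (simp add: L2_def convergent_LIMSEQ_iff)
  ultimately have "(\<lambda>n. a * survival a b n 1 + b * survival b a n 1) \<longlonglongrightarrow> a * L1 + b * L2"
    by (intro tendsto_add tendsto_mult_left)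
  moreover have "survival a b (Suc n) 0 = a * survival a b n 1 + b * survival b a n 1" for n
    using survival_mirror[of a b n "- 1"] by simp
  ultimately have lim_Suc: "(\<lambda>n. survival a b (Suc n) 0) \<longlonglongrightarrow> a * L1 + b * L2"
    by (simp only:)
  have "L1 \<le> max 0 (1 - b / a)"
    using survival_limit_one_le[OF assms] by (simp add: L1_def)
  moreover have "L2 \<le> max 0 (1 - a / b)"
    using survival_limit_one_le[OF ba] by (simp add: L2_def)
  ultimately have "a * L1 + b * L2 \<le> a * max 0 (1 - b / a) + b * max 0 (1 - a / b)"
    using assms by (intro add_mono mult_left_mono) auto
  then have upper: "a * L1 + b * L2 \<le> \<bar>a - b\<bar>"
    unfolding abs_diff_eq_ruin_sum[OF \<open>0 < a\<close> \<open>0 < b\<close>] .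
  have lower: "\<bar>a - b\<bar> \<le> a * L1 + b * L2"
  proof (rule tendsto_lowerbound[OF lim_Suc])
    show "\<forall>\<^sub>F n in sequentially. \<bar>a - b\<bar> \<le> survival a b (Suc n) 0"
      by (intro always_eventually allI survival_zero_ge_abs_diff[OF assms])
  qed simp
  have "(\<lambda>n. survival a b (Suc n) 0) \<longlonglongrightarrow> \<bar>a - b\<bar>"
    using lim_Suc upper lower by simp
  then show ?thesis
    by (rule LIMSEQ_imp_Suc)
qed

lemma linear_three_point_average:
  fixes a :: real and x :: int and n :: nat
  shows "a * ((x + 1) / (n + 1)) + a * ((x - 1) / (n + 1)) + (1 - a - a) * (x / (n + 1)) = x / (n + 1)"
proof -
  have "a * ((x + 1) / (n + 1)) + a * ((x - 1) / (n + 1)) + (1 - a - a) * (x / (n + 1))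
      = (a * (x + 1) + a * (x - 1) + (1 - a - a) * x) / (n + 1)"
    by (simp only: times_divide_eq_right add_divide_distrib[symmetric] diff_divide_distrib[symmetric])
  also have "a * (x + 1) + a * (x - 1) + (1 - a - a) * x = x"
    by (simp add: algebra_simps)
  finally show ?thesis .
qed

lemma symmetric_step_ge_min_ratio:
  fixes a :: real and x :: int
  assumes "0 < a" "2 * a \<le> 1" "x \<ge> 1"
  shows "min 1 (x / real (Suc (Suc n)))
    \<le> a * min 1 ((x + 1) / real (Suc n)) + a * min 1 ((x - 1) / real (Suc n)) + (1 - a - a) * min 1 (x / real (Suc n))"
proof -
  define g where "g y = min 1 (real_of_int y / real (Suc n))" for y
  consider "x \<le> int n" | "x = int n + 1" | "x \<ge> int n + 2"
    by linarith
  then have "min 1 (x / real (Suc (Suc n))) \<le> a * g (x + 1) + a * g (x - 1) + (1 - a - a) * g x"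
  proof cases
    case 1
    then have "g (x + 1) = (x + 1) / (n + 1)" "g (x - 1) = (x - 1) / (n + 1)" "g x = x / (n + 1)"
      by (simp_all add: g_def min_def divide_le_eq_1 add.commute)
    moreover have "real_of_int x / (n + 2) \<le> real_of_int x / (n + 1)"
      using assms by (intro divide_left_mono) auto
    moreover note linear_three_point_average[of a x n]
    ultimately show ?thesis
      by (simp add: min_le_iff_disj add.commute)
  next
    case 2
    then have "g (x + 1) = 1" "g (x - 1) = n / (n + 1)" "g x = 1"
      by (auto simp: g_def min_def field_simps)
    moreover have "a / (n + 1) \<le> 1 / (n + 2)"
      using assms mult_right_mono[of a "1/2" "real n"] by (simp add: field_simps)
    moreover have "a * 1 + a * (n / (n + 1)) + (1 - a - a) * 1 = 1 - a / (n + 1)"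
      by (simp add: field_simps)
    moreover have "real_of_int x / (n + 2) = 1 - 1 / (n + 2)"
      using 2 by (simp add: field_simps)
    ultimately show ?thesis
      by (simp add: min_le_iff_disj)
  next
    case 3
    then have "g (x + 1) = 1" "g (x - 1) = 1" "g x = 1"
      by (auto simp: g_def min_def field_simps)
    then show ?thesis
      by simp
  qed
  then show ?thesis
    by (simp add: g_def)
qed

lemma survival_symmetric_ge:
  assumes "0 < a" "2 * a \<le> 1" "x \<ge> 1"
  shows "min 1 (x / real (Suc n)) \<le> survival a a n x"
  using assms(3)
proof (induction n arbitrary: x)
  case 0
  then show ?case by simp
next
  case (Suc n)
  define g where "g y = min 1 (real_of_int y / real (Suc n))" for y
  have up: "g (x + 1) \<le> survival a a n (x + 1)"
    using Suc.IH[of "x + 1"] Suc.prems by (simp add: g_def)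
  have stay: "g x \<le> survival a a n x"
    using Suc by (simp add: g_def)
  have down: "g (x - 1) \<le> (if x - 1 = 0 then 0 else survival a a n (x - 1))"
    using Suc.IH[of "x - 1"] Suc.prems by (auto simp: g_def)
  have "a * g (x + 1) + a * g (x - 1) + (1 - a - a) * g x \<le> survival a a (Suc n) x"
    using up down stay Suc.prems assms by (simp only: survival.simps) (intro add_mono mult_left_mono; simp)
  then show ?case
    using symmetric_step_ge_min_ratio[OF assms(1,2) Suc.prems, of n] unfolding g_def by linarith
qed

lemma survival_zero_not_summable:
  assumes "0 < a" "0 < b" "a + b \<le> 1"
  shows "\<not> summable (\<lambda>n. survival a b n 0)"
proof
  assume summable: "summable (\<lambda>n. survival a b n 0)"
  show False
  proof (cases "a = b")
    case False
    have "(\<lambda>n. survival a b n 0) \<longlonglongrightarrow> 0"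
      using summable by (rule summable_LIMSEQ_zero)
    then have "\<bar>a - b\<bar> = 0"
      using survival_zero_tendsto[OF assms] LIMSEQ_unique by blast
    then show False
      using False by simp
  next
    case True
    have harmonic_bound: "a * inverse (real (Suc n)) \<le> survival a b (Suc n) 0" for n
    proof -
      have "inverse (real (Suc n)) \<le> 1"
        by (simp add: field_simps)
      then have "inverse (real (Suc n)) \<le> survival a a n 1"
        using survival_symmetric_ge[of a 1 n] assms True by (simp add: inverse_eq_divide min_absorb2)
      moreover have "0 \<le> survival a a n (- 1)"
        using survival_bounds[of a a n "- 1"] assms True by simp
      ultimately have "a * inverse (real (Suc n)) + a * 0 \<le> a * survival a a n 1 + a * survival a a n (- 1)"
        using assms by (intro add_mono mult_left_mono) auto
      then show ?thesis
        using True by simp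
    qed
    have "summable (\<lambda>n. survival a b (Suc n) 0)"
      using summable by (subst summable_Suc_iff)
    then have "summable (\<lambda>n. a * inverse (real (Suc n)))"
      by (rule summable_comparison_test') (use harmonic_bound assms in auto)
    then have "summable (\<lambda>n. inverse (real (Suc n)))"
      using summable_cmult_iff[of a] assms by simp
    then show False
      using not_summable_harmonic[where 'a = real] summable_Suc_iff[of "\<lambda>n. inverse (real n)"] by simp
  qed
qed

definition avoids_zero :: "'a measure \<Rightarrow> (nat \<Rightarrow> 'a \<Rightarrow> real) \<Rightarrow> nat \<Rightarrow> nat \<Rightarrow> real \<Rightarrow> 'a set" where
  "avoids_zero M D m n x = {\<omega> \<in> space M. \<forall>k\<in>{1..n}. x + (\<Sum>i\<in>{Suc m..m + k}. D i \<omega>) \<noteq> 0}"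

lemma avoids_zero_Suc_iff:
  "\<omega> \<in> avoids_zero M D m (Suc n) x \<longleftrightarrow>
     x + D (Suc m) \<omega> \<noteq> 0 \<and> \<omega> \<in> avoids_zero M D (Suc m) n (x + D (Suc m) \<omega>)"
proof -
  have "{1..Suc n} = insert 1 (Suc ` {1..n})"
    using atLeastAtMost_insertL[of 1 "Suc n"] by simp
  then have times: "(\<forall>k\<in>{1..Suc n}. P k) \<longleftrightarrow> P 1 \<and> (\<forall>k\<in>{1..n}. P (Suc k))" for P :: "nat \<Rightarrow> bool"
    by (simp only: Set.ball_simps(7,9))
  have first: "x + (\<Sum>i\<in>{Suc m..m + 1}. D i \<omega>) = x + D (Suc m) \<omega>"
    by simp
  have later: "x + (\<Sum>i\<in>{Suc m..m + Suc k}. D i \<omega>) = x + D (Suc m) \<omega> + (\<Sum>i\<in>{Suc (Suc m)..Suc m + k}. D i \<omega>)"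
    for k
    by (subst sum.atLeast_Suc_atMost) (simp_all add: add.assoc)
  show ?thesis
    unfolding avoids_zero_def mem_Collect_eq times first later by blast
qed

lemma avoids_zero_cong:
  assumes "\<And>i \<omega>. Suc m \<le> i \<Longrightarrow> i \<le> m + n \<Longrightarrow> D i \<omega> = D' i \<omega>"
  shows "avoids_zero M D m n x = avoids_zero M D' m n x"
proof -
  have sums: "(\<Sum>i\<in>{Suc m..m + k}. D i \<omega>) = (\<Sum>i\<in>{Suc m..m + k}. D' i \<omega>)" if "k \<le> n" for k \<omega>
    using that assms by (intro sum.cong) auto
  show ?thesis
    unfolding avoids_zero_def by (intro Collect_cong conj_cong refl ball_cong) (auto simp: sums)
qed

lemma avoids_zero_sets:
  assumes "\<And>i. m < i \<Longrightarrow> i \<le> m + n \<Longrightarrow> D i \<in> borel_measurable M"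
  shows "avoids_zero M D m n x \<in> sets M"
proof -
  have "(\<lambda>\<omega>. x + (\<Sum>i\<in>{Suc m..m + k}. D i \<omega>)) \<in> borel_measurable M" if "k \<le> n" for k
    using assms that by (intro borel_measurable_add borel_measurable_const borel_measurable_sum) auto
  then have "{\<omega> \<in> space M. x + (\<Sum>i\<in>{Suc m..m + k}. D i \<omega>) \<noteq> 0} \<in> sets M" if "k \<le> n" for k
    using that by (intro sets.sets_Collect_neg borel_measurable_eq borel_measurable_const)
  then show ?thesis
    unfolding avoids_zero_def by (intro sets.sets_Collect_finite_All) auto
qed

lemma (in prob_space) indep_first_increment:
  assumes indep: "indep_vars (\<lambda>_. borel) D {1..}"
  shows "prob ({\<omega> \<in> space M. D (Suc m) \<omega> = s} \<inter> avoids_zero M D (Suc m) n y)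
       = prob {\<omega> \<in> space M. D (Suc m) \<omega> = s} * prob (avoids_zero M D (Suc m) n y)"
proof -
  define A where "A = {Suc m}"
  define B where "B = {Suc (Suc m)..Suc m + n}"
  define first where "first \<omega> = restrict (\<lambda>i. D i \<omega>) A" for \<omega>
  define rest where "rest \<omega> = restrict (\<lambda>i. D i \<omega>) B" for \<omega>
  define SA where "SA = (\<lambda>\<phi>. \<phi> (Suc m)) -` {s} \<inter> space (PiM A (\<lambda>_. borel :: real measure))"
  define SB where "SB = avoids_zero (PiM B (\<lambda>_. borel :: real measure)) (\<lambda>i \<phi>. \<phi> i) (Suc m) n y"
  have "indep_var (PiM A (\<lambda>_. borel)) first (PiM B (\<lambda>_. borel)) rest"
    unfolding first_def rest_def by (rule indep_var_restrict[OF indep]) (auto simp: A_def B_def)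
  moreover have "SA \<in> sets (PiM A (\<lambda>_. borel))"
    unfolding SA_def by (rule measurable_sets[OF measurable_component_singleton]) (auto simp: A_def)
  moreover have "SB \<in> sets (PiM B (\<lambda>_. borel))"
    unfolding SB_def by (intro avoids_zero_sets measurable_component_singleton) (auto simp: B_def)
  ultimately have product: "prob ((\<lambda>\<omega>. (first \<omega>, rest \<omega>)) -` (SA \<times> SB) \<inter> space M)
      = prob (first -` SA \<inter> space M) * prob (rest -` SB \<inter> space M)"
    by (rule indep_varD)
  have "first \<omega> \<in> space (PiM A (\<lambda>_. borel))" "first \<omega> (Suc m) = D (Suc m) \<omega>" for \<omega>
    by (simp_all add: first_def A_def space_PiM)
  then have first: "first -` SA \<inter> space M = {\<omega> \<in> space M. D (Suc m) \<omega> = s}"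
    unfolding SA_def by auto
  have "rest \<omega> \<in> space (PiM B (\<lambda>_. borel))" for \<omega>
    by (simp add: rest_def space_PiM)
  then have "rest -` SB \<inter> space M = avoids_zero M (\<lambda>i \<omega>. rest \<omega> i) (Suc m) n y"
    unfolding SB_def avoids_zero_def by blast
  also have "\<dots> = avoids_zero M D (Suc m) n y"
    by (rule avoids_zero_cong) (simp add: rest_def B_def)
  finally have rest: "rest -` SB \<inter> space M = avoids_zero M D (Suc m) n y" .
  have "(\<lambda>\<omega>. (first \<omega>, rest \<omega>)) -` (SA \<times> SB) \<inter> space M = (first -` SA \<inter> space M) \<inter> (rest -` SB \<inter> space M)"
    by auto
  then show ?thesis
    using product unfolding first rest by simp
qed

locale lazy_walk = prob_space +
  fixes D :: "nat \<Rightarrow> 'a \<Rightarrow> real" and a b :: real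
  assumes indep_increments: "indep_vars (\<lambda>_. borel) D {1..}"
    and increment_values: "\<And>k. k \<ge> 1 \<Longrightarrow> AE \<omega> in M. D k \<omega> \<in> {1, -1, 0}"
    and prob_up: "\<And>k. k \<ge> 1 \<Longrightarrow> prob {\<omega> \<in> space M. D k \<omega> = 1} = a"
    and prob_down: "\<And>k. k \<ge> 1 \<Longrightarrow> prob {\<omega> \<in> space M. D k \<omega> = -1} = b"
begin

lemma increment_measurable: "k \<ge> 1 \<Longrightarrow> D k \<in> borel_measurable M"
  using indep_increments by (auto simp: indep_vars_def)

lemma increment_level_set: "k \<ge> 1 \<Longrightarrow> {\<omega> \<in> space M. D k \<omega> = s} \<in> events"
  by (rule borel_measurable_eq[OF increment_measurable borel_measurable_const])

lemma avoids_zero_events: "avoids_zero M D m n x \<in> events"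
  by (rule avoids_zero_sets) (auto intro: increment_measurable)

lemma prob_split_increment:
  assumes "A \<in> events" "k \<ge> 1"
  shows "prob A = (\<Sum>s\<in>{1, -1, 0}. prob ({\<omega> \<in> space M. D k \<omega> = s} \<inter> A))"
proof -
  have "AE \<omega> in M. \<omega> \<in> A \<longleftrightarrow> \<omega> \<in> (\<Union>s\<in>{1, -1, 0}. {\<omega> \<in> space M. D k \<omega> = s} \<inter> A)"
    using increment_values[OF \<open>k \<ge> 1\<close>] by eventually_elim (use sets.sets_into_space[OF \<open>A \<in> events\<close>] in auto)
  then have "prob A = prob (\<Union>s\<in>{1, -1, 0}. {\<omega> \<in> space M. D k \<omega> = s} \<inter> A)"
    using assms increment_level_set by (intro measure_eq_AE) auto
  also have "\<dots> = (\<Sum>s\<in>{1, -1, 0}. prob ({\<omega> \<in> space M. D k \<omega> = s} \<inter> A))"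
    using assms increment_level_set
    by (intro finite_measure_finite_Union) (auto simp: disjoint_family_on_def)
  finally show ?thesis .
qed

lemma prob_stay:
  assumes "k \<ge> 1"
  shows "prob {\<omega> \<in> space M. D k \<omega> = 0} = 1 - a - b"
proof -
  have "{\<omega> \<in> space M. D k \<omega> = s} \<inter> space M = {\<omega> \<in> space M. D k \<omega> = s}" for s
    by auto
  then have "1 = a + (b + prob {\<omega> \<in> space M. D k \<omega> = 0})"
    using prob_split_increment[OF sets.top assms] prob_up[OF assms] prob_down[OF assms] prob_space by simp
  then show ?thesis
    by linarith
qed

lemma step_probs_le_one: "a + b \<le> 1"
  using prob_stay[of 1] measure_nonneg[of M "{\<omega> \<in> space M. D 1 \<omega> = 0}"] by simp

lemma prob_first_step:
  "prob ({\<omega> \<in> space M. D (Suc m) \<omega> = of_int t} \<inter> avoids_zero M D m (Suc n) (of_int x))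
     = prob {\<omega> \<in> space M. D (Suc m) \<omega> = of_int t}
       * (if x + t = 0 then 0 else prob (avoids_zero M D (Suc m) n (of_int (x + t))))"
proof -
  define E where "E = {\<omega> \<in> space M. D (Suc m) \<omega> = of_int t}"
  show ?thesis
  proof (cases "x + t = 0")
    case True
    then have "of_int x + of_int t = (0 :: real)"
      by (simp flip: of_int_add)
    then have "E \<inter> avoids_zero M D m (Suc n) (of_int x) = {}"
      by (auto simp: E_def avoids_zero_Suc_iff)
    then show ?thesis
      using True by (simp add: E_def)
  next
    case False
    then have "E \<inter> avoids_zero M D m (Suc n) (of_int x) = E \<inter> avoids_zero M D (Suc m) n (of_int (x + t))"
      by (auto simp: E_def avoids_zero_Suc_iff)
    then show ?thesis
      using False indep_first_increment[OF indep_increments, of m "of_int t" n "of_int (x + t)"]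
      by (simp add: E_def)
  qed
qed

lemma prob_avoids_zero: "prob (avoids_zero M D m n (of_int x)) = survival a b n x"
proof (induction n arbitrary: m x)
  case 0
  have "avoids_zero M D m 0 (of_int x) = space M"
    by (auto simp: avoids_zero_def)
  then show ?case
    by (simp add: prob_space)
next
  case (Suc n)
  have "prob (avoids_zero M D m (Suc n) (of_int x))
      = (\<Sum>s\<in>{1, -1, 0}. prob ({\<omega> \<in> space M. D (Suc m) \<omega> = s} \<inter> avoids_zero M D m (Suc n) (of_int x)))"
    by (intro prob_split_increment avoids_zero_events) simp
  also have "\<dots> = (\<Sum>t\<in>{1, -1, 0 :: int}.
      prob ({\<omega> \<in> space M. D (Suc m) \<omega> = of_int t} \<inter> avoids_zero M D m (Suc n) (of_int x)))"
    by simp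
  also have "\<dots> = (\<Sum>t\<in>{1, -1, 0 :: int}.
      prob {\<omega> \<in> space M. D (Suc m) \<omega> = of_int t} * (if x + t = 0 then 0 else survival a b n (x + t)))"
    by (simp only: prob_first_step Suc.IH)
  also have "\<dots> = survival a b (Suc n) x"
    using prob_up[of "Suc m"] prob_down[of "Suc m"] prob_stay[of "Suc m"] by (simp add: add.assoc)
  finally show ?case .
qed

lemma prob_never_zero:
  assumes "0 < a" "0 < b"
  shows "prob (\<Inter>n. avoids_zero M D 0 n 0) = \<bar>a - b\<bar>"
proof -
  have "decseq (\<lambda>n. avoids_zero M D 0 n 0)"
    by (intro decseq_SucI) (auto simp: avoids_zero_def)
  then have "(\<lambda>n. prob (avoids_zero M D 0 n 0)) \<longlonglongrightarrow> prob (\<Inter>n. avoids_zero M D 0 n 0)"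
    by (intro finite_Lim_measure_decseq) (auto intro: avoids_zero_events)
  moreover have "(\<lambda>n. prob (avoids_zero M D 0 n 0)) \<longlonglongrightarrow> \<bar>a - b\<bar>"
    using prob_avoids_zero[of 0 _ 0] survival_zero_tendsto[OF assms step_probs_le_one] by simp
  ultimately show ?thesis
    by (rule LIMSEQ_unique)
qed

lemma suminf_prob_avoids_zero:
  assumes "0 < a" "0 < b"
  shows "(\<Sum>n. emeasure M (avoids_zero M D 0 n 0)) = \<infinity>"
proof -
  have "emeasure M (avoids_zero M D 0 n 0) = ennreal (survival a b n 0)" for n
    using prob_avoids_zero[of 0 n 0] by (simp add: emeasure_eq_measure)
  moreover have "(\<Sum>n. ennreal (survival a b n 0)) = top"
  proof (rule summable_iff_suminf_neq_top)
    show "0 \<le> survival a b n 0" for n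
      using survival_bounds[of a b n 0] assms step_probs_le_one by simp
    show "\<not> summable (\<lambda>n. survival a b n 0)"
      using survival_zero_not_summable[OF assms step_probs_le_one] .
  qed
  ultimately show ?thesis
    by simp
qed

end

lemma (in prob_space) indep_vars_prob_Int:
  fixes Y :: "'i \<Rightarrow> 'a \<Rightarrow> real"
  assumes "indep_vars (\<lambda>_. borel) Y I" "i \<in> I" "j \<in> I" "i \<noteq> j"
  shows "prob ({\<omega> \<in> space M. Y i \<omega> = s} \<inter> {\<omega> \<in> space M. Y j \<omega> = t})
       = prob {\<omega> \<in> space M. Y i \<omega> = s} * prob {\<omega> \<in> space M. Y j \<omega> = t}"
proof -
  define V where "V l = (if l = i then {s} else {t})" for l
  have "prob (\<Inter>l\<in>{i, j}. Y l -` V l \<inter> space M) = (\<Prod>l\<in>{i, j}. prob (Y l -` V l \<inter> space M))"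
    using assms by (intro indep_varsD) (auto simp: V_def)
  moreover have "Y i -` V i \<inter> space M = {\<omega> \<in> space M. Y i \<omega> = s}"
    "Y j -` V j \<inter> space M = {\<omega> \<in> space M. Y j \<omega> = t}"
    using \<open>i \<noteq> j\<close> by (auto simp: V_def)
  ultimately show ?thesis
    using \<open>i \<noteq> j\<close> by simp
qed

lemma (in prob_space) indep_pairs_measurable:
  assumes "indep_vars (\<lambda>_. borel) (\<lambda>(j, k). X j k) I" "(j, k) \<in> I"
  shows "X j k \<in> borel_measurable M"
  using assms by (auto simp: indep_vars_def)

lemma (in prob_space) indep_pair_differences:
  fixes X :: "nat \<Rightarrow> 'i \<Rightarrow> 'a \<Rightarrow> real"
  assumes "indep_vars (\<lambda>_. borel) (\<lambda>(j, k). X j k) ({1, 2} \<times> I)"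
  shows "indep_vars (\<lambda>_. borel) (\<lambda>k \<omega>. X 1 k \<omega> - X 2 k \<omega>) I"
proof -
  have "indep_vars (\<lambda>k. PiM ({1, 2} \<times> {k}) (\<lambda>_. borel))
      (\<lambda>k \<omega>. restrict (\<lambda>i. (\<lambda>(j, k). X j k) i \<omega>) ({1, 2} \<times> {k})) I"
    by (rule indep_vars_restrict[OF assms]) (auto simp: disjoint_family_on_def)
  then have "indep_vars (\<lambda>_. borel)
      (\<lambda>k \<omega>. (\<lambda>\<phi>. \<phi> (1, k) - \<phi> (2, k)) (restrict (\<lambda>i. (\<lambda>(j, k). X j k) i \<omega>) ({1, 2} \<times> {k}))) I"
    by (rule indep_vars_compose2) (auto intro!: borel_measurable_diff measurable_component_singleton)
  then show ?thesis
    by simp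
qed

lemma (in prob_space) AE_zero_one_valued:
  fixes f :: "'a \<Rightarrow> real"
  assumes "f \<in> borel_measurable M"
    and "prob {\<omega> \<in> space M. f \<omega> = 0} + prob {\<omega> \<in> space M. f \<omega> = 1} = 1"
  shows "AE \<omega> in M. f \<omega> \<in> {0, 1}"
proof -
  have "{\<omega> \<in> space M. f \<omega> = e} \<in> events" for e
    using assms(1) by (intro borel_measurable_eq borel_measurable_const)
  then have "prob ({\<omega> \<in> space M. f \<omega> = 0} \<union> {\<omega> \<in> space M. f \<omega> = 1}) = 1"
    using assms(2) by (subst finite_measure_Union) auto
  then have "AE \<omega> in M. \<omega> \<in> {\<omega> \<in> space M. f \<omega> = 0} \<union> {\<omega> \<in> space M. f \<omega> = 1}"
    by (rule AE_prob_1)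
  then show ?thesis
    by eventually_elim auto
qed

lemma (in prob_space) prob_zero_one_difference:
  fixes f g :: "'a \<Rightarrow> real"
  assumes "f \<in> borel_measurable M" "g \<in> borel_measurable M"
    and "AE \<omega> in M. f \<omega> \<in> {0, 1}" "AE \<omega> in M. g \<omega> \<in> {0, 1}"
    and "e1 \<in> {0, 1}" "e2 \<in> {0, 1}" "e1 \<noteq> e2"
  shows "prob {\<omega> \<in> space M. f \<omega> - g \<omega> = e1 - e2}
    = prob ({\<omega> \<in> space M. f \<omega> = e1} \<inter> {\<omega> \<in> space M. g \<omega> = e2})"
proof (rule measure_eq_AE)
  show "AE \<omega> in M. \<omega> \<in> {\<omega> \<in> space M. f \<omega> - g \<omega> = e1 - e2}
      \<longleftrightarrow> \<omega> \<in> {\<omega> \<in> space M. f \<omega> = e1} \<inter> {\<omega> \<in> space M. g \<omega> = e2}"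
    using assms(3,4) by eventually_elim (use assms(5-7) in auto)
  show "{\<omega> \<in> space M. f \<omega> - g \<omega> = e1 - e2} \<in> events"
    using assms(1,2) by (intro borel_measurable_eq borel_measurable_diff borel_measurable_const)
  show "{\<omega> \<in> space M. f \<omega> = e1} \<inter> {\<omega> \<in> space M. g \<omega> = e2} \<in> events"
    using assms(1,2) by (intro sets.Int borel_measurable_eq borel_measurable_const)
qed

lemma (in prob_space) bernoulli_difference_lazy_walk:
  fixes X :: "nat \<Rightarrow> nat \<Rightarrow> 'a \<Rightarrow> real"
  assumes indep: "indep_vars (\<lambda>_. borel) (\<lambda>(j, k). X j k) ({1, 2} \<times> {1..})"
    and X1_one: "\<And>k. k \<ge> 1 \<Longrightarrow> prob {\<omega> \<in> space M. X 1 k \<omega> = 1} = p1"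
    and X1_zero: "\<And>k. k \<ge> 1 \<Longrightarrow> prob {\<omega> \<in> space M. X 1 k \<omega> = 0} = 1 - p1"
    and X2_one: "\<And>k. k \<ge> 1 \<Longrightarrow> prob {\<omega> \<in> space M. X 2 k \<omega> = 1} = p2"
    and X2_zero: "\<And>k. k \<ge> 1 \<Longrightarrow> prob {\<omega> \<in> space M. X 2 k \<omega> = 0} = 1 - p2"
  shows "lazy_walk M (\<lambda>k \<omega>. X 1 k \<omega> - X 2 k \<omega>) (p1 * (1 - p2)) ((1 - p1) * p2)"
proof (intro lazy_walk.intro lazy_walk_axioms.intro)
  fix k :: nat
  assume "k \<ge> 1"
  have X_measurable: "X 1 k \<in> borel_measurable M" "X 2 k \<in> borel_measurable M"
    using indep_pairs_measurable[OF indep] \<open>k \<ge> 1\<close> by simp_all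
  have zero_one: "AE \<omega> in M. X 1 k \<omega> \<in> {0, 1}" "AE \<omega> in M. X 2 k \<omega> \<in> {0, 1}"
    using AE_zero_one_valued X_measurable X1_one X1_zero X2_one X2_zero \<open>k \<ge> 1\<close> by simp_all
  have pair: "prob ({\<omega> \<in> space M. X 1 k \<omega> = e1} \<inter> {\<omega> \<in> space M. X 2 k \<omega> = e2})
      = prob {\<omega> \<in> space M. X 1 k \<omega> = e1} * prob {\<omega> \<in> space M. X 2 k \<omega> = e2}" for e1 e2
    using indep_vars_prob_Int[OF indep, of "(1, k)" "(2, k)"] \<open>k \<ge> 1\<close> by simp
  show "AE \<omega> in M. X 1 k \<omega> - X 2 k \<omega> \<in> {1, -1, 0}"
    using zero_one by eventually_elim auto
  show "prob {\<omega> \<in> space M. X 1 k \<omega> - X 2 k \<omega> = 1} = p1 * (1 - p2)"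
    using prob_zero_one_difference[OF X_measurable zero_one, of 1 0] pair X1_one X2_zero \<open>k \<ge> 1\<close> by simp
  show "prob {\<omega> \<in> space M. X 1 k \<omega> - X 2 k \<omega> = -1} = (1 - p1) * p2"
    using prob_zero_one_difference[OF X_measurable zero_one, of 0 1] pair X1_zero X2_one \<open>k \<ge> 1\<close> by simp
qed (use prob_space_axioms indep_pair_differences[OF indep] in auto)

lemma enat_less_first_meet_iff:
  "enat n < first_meet X \<omega> \<longleftrightarrow> (\<forall>k\<in>{1..n}. partial_sum X 1 k \<omega> \<noteq> partial_sum X 2 k \<omega>)"
proof (cases "\<exists>k\<ge>1. partial_sum X 1 k \<omega> = partial_sum X 2 k \<omega>")
  case True
  define P where "P k \<longleftrightarrow> k \<ge> 1 \<and> partial_sum X 1 k \<omega> = partial_sum X 2 k \<omega>" for k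
  have "P (LEAST k. P k)"
    by (rule LeastI_ex) (use True in \<open>auto simp: P_def\<close>)
  moreover have "\<not> P k" if "k < (LEAST k. P k)" for k
    using not_less_Least[OF that] .
  ultimately have "n < (LEAST k. P k) \<longleftrightarrow> (\<forall>k\<in>{1..n}. \<not> P k)"
    by (metis atLeastAtMost_iff le_less_trans not_le P_def)
  then show ?thesis
    using True by (simp add: first_meet_def P_def)
next
  case False
  then show ?thesis
    by (auto simp: first_meet_def)
qed

lemma first_meet_tail_set:
  "{\<omega> \<in> space M. enat n < first_meet X \<omega>} = avoids_zero M (\<lambda>k \<omega>. X 1 k \<omega> - X 2 k \<omega>) 0 n 0"
proof -
  have "avoids_zero M (\<lambda>k \<omega>. X 1 k \<omega> - X 2 k \<omega>) 0 n 0
      = {\<omega> \<in> space M. \<forall>k\<in>{1..n}. partial_sum X 1 k \<omega> \<noteq> partial_sum X 2 k \<omega>}"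
    by (simp add: avoids_zero_def partial_sum_def sum_subtractf)
  then show ?thesis
    by (simp add: enat_less_first_meet_iff)
qed

lemma first_meet_infinite_set:
  "{\<omega> \<in> space M. first_meet X \<omega> = \<infinity>} = (\<Inter>n. avoids_zero M (\<lambda>k \<omega>. X 1 k \<omega> - X 2 k \<omega>) 0 n 0)"
proof -
  have "e = \<infinity> \<longleftrightarrow> (\<forall>n. enat n < e)" for e :: enat
    by (cases e) auto
  then show ?thesis
    unfolding first_meet_tail_set[symmetric] by auto
qed

lemma nn_integral_first_meet:
  assumes "\<And>j k. j \<in> {1, 2} \<Longrightarrow> k \<ge> 1 \<Longrightarrow> X j k \<in> borel_measurable M"
  shows "(\<integral>\<^sup>+ \<omega>. ennreal_of_enat (first_meet X \<omega>) \<partial>M)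
    = (\<Sum>n. emeasure M (avoids_zero M (\<lambda>k \<omega>. X 1 k \<omega> - X 2 k \<omega>) 0 n 0))"
proof -
  have [measurable]: "partial_sum X 1 n \<in> borel_measurable M" "partial_sum X 2 n \<in> borel_measurable M" for n
    unfolding partial_sum_def[abs_def] using assms by (auto intro!: borel_measurable_sum)
  have "first_meet X \<in> measurable M (count_space UNIV)"
    unfolding first_meet_def[abs_def] by measurable
  then show ?thesis
    unfolding first_meet_tail_set[symmetric] by (rule nn_integral_enat_function)
qed

theorem theorem3:
  fixes M :: "'a measure" and X :: "nat \<Rightarrow> nat \<Rightarrow> 'a \<Rightarrow> real" and p1 p2 :: real
  assumes "prob_space M"
    and "0 < p1" "p1 < 1" "0 < p2" "p2 < 1"
    and indep: "prob_space.indep_vars M (\<lambda>_. borel) (\<lambda>(j, k). X j k) ({1, 2} \<times> {1..})"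
    and X1_one: "\<And>k. k \<ge> 1 \<Longrightarrow> measure M {\<omega> \<in> space M. X 1 k \<omega> = 1} = p1"
    and X1_zero: "\<And>k. k \<ge> 1 \<Longrightarrow> measure M {\<omega> \<in> space M. X 1 k \<omega> = 0} = 1 - p1"
    and X2_one: "\<And>k. k \<ge> 1 \<Longrightarrow> measure M {\<omega> \<in> space M. X 2 k \<omega> = 1} = p2"
    and X2_zero: "\<And>k. k \<ge> 1 \<Longrightarrow> measure M {\<omega> \<in> space M. X 2 k \<omega> = 0} = 1 - p2"
  shows "measure M {\<omega> \<in> space M. first_meet X \<omega> = \<infinity>} = \<bar>p1 - p2\<bar>
         \<and> (\<integral>\<^sup>+ \<omega>. ennreal_of_enat (first_meet X \<omega>) \<partial>M) = \<infinity>"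
proof -
  interpret prob_space M
    by fact
  interpret walk: lazy_walk M "\<lambda>k \<omega>. X 1 k \<omega> - X 2 k \<omega>" "p1 * (1 - p2)" "(1 - p1) * p2"
    by (rule bernoulli_difference_lazy_walk[OF indep X1_one X1_zero X2_one X2_zero])
  have positive: "0 < p1 * (1 - p2)" "0 < (1 - p1) * p2"
    using assms by simp_all
  have X_measurable: "X j k \<in> borel_measurable M" if "j \<in> {1, 2}" "k \<ge> 1" for j k
    using indep_pairs_measurable[OF indep] that by simp
  have "p1 * (1 - p2) - (1 - p1) * p2 = p1 - p2"
    by (simp add: algebra_simps)
  then have "measure M {\<omega> \<in> space M. first_meet X \<omega> = \<infinity>} = \<bar>p1 - p2\<bar>"
    using walk.prob_never_zero[OF positive] by (simp add: first_meet_infinite_set)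
  moreover have "(\<integral>\<^sup>+ \<omega>. ennreal_of_enat (first_meet X \<omega>) \<partial>M)
      = (\<Sum>n. emeasure M (avoids_zero M (\<lambda>k \<omega>. X 1 k \<omega> - X 2 k \<omega>) 0 n 0))"
    by (rule nn_integral_first_meet[OF X_measurable])
  ultimately show ?thesis
    using walk.suminf_prob_avoids_zero[OF positive] by simp
qed

end
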